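(* Let $X\subset\mathbb R^2$ and let $\{\alpha_t:[0,1]\to X\}$ be a countable collection of nonconstant oscillatory geodesics, each parameterized proportional to total oscillation. Then there exists a line $l$ in the plane that is transverse to $\alpha_t$ for every $t$.
   Context: Total oscillation: let $g:\mathbb R^2\to[-1,1]$ depend only on $x_1$ with $g=-1$ for $x_1\le-3$, $\frac12(x_1+1)$ on $[-3,-1]$, $0$ on $[-1,1]$, $\frac12(x_1-1)$ on $[1,3]$, $1$ for $x_1\ge3$; for distinct parallel lines $(P,Q)$, $g_{(P,Q)}=g\circ h_{(P,Q)}$ with $h_{(P,Q)}$ a similarity sending $P$ to $\{x_1=-3\}$, $Q$ to $\{x_1=3\}$; $o(f,(P,Q))=\sup-\sum_{i=1}^k g_{(P,Q)}(f(a_{i-1}))g_{(P,Q)}(f(a_i))$ over finite $a\le a_0\le\dots\le a_k\le b$; with a fixed countable dense set $\{(P_i,Q_i)\}$ of pairs of parallel lines, $\mathcal T(\alpha)=\sum_i2^{-i}\frac{o(\alpha,(P_i,Q_i))}{1+o(\alpha,(P_i,Q_i))}$. An oscillatory geodesic in $X$ is a path of minimal $\mathcal T$ among paths in $X$ homotopic to it rel endpoints; $\alpha:[0,1]\to X$ is parameterized proportional to total oscillation if $\mathcal T(\alpha|_{[0,t]})=t\,\mathcal T(\alpha)$ for all $t$. A line $l$ is transverse to a path $\gamma:[a,b]\to X$ if no nonempty open interval $(c,d)\subset[a,b]$ is mapped by $\gamma$ into a line segment parallel to $l$. *)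

theory Defs
  imports "HOL-Analysis.Analysis"
begin

text \<open>The profile function g (depending only on the first coordinate).\<close>
definition gfun :: "real \<Rightarrow> real" where
  "gfun y = (if y \<le> -3 then -1
             else if y \<le> -1 then (y + 1) / 2
             else if y \<le> 1 then 0
             else if y \<le> 3 then (y - 1) / 2
             else 1)"

text \<open>A pair of distinct parallel lines (P,Q) is encoded by a triple (u,p,q) with u \<noteq> 0, p \<noteq> q:
  P = {x. u \<bullet> x = p}, Q = {x. u \<bullet> x = q}.\<close>
definition valid_pair :: "(real^2) \<times> real \<times> real \<Rightarrow> bool" where
  "valid_pair D \<longleftrightarrow> (case D of (u, p, q) \<Rightarrow> u \<noteq> 0 \<and> p \<noteq> q)"

definition line_P :: "(real^2) \<times> real \<times> real \<Rightarrow> (real^2) set" where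
  "line_P D = (case D of (u, p, q) \<Rightarrow> {x. u \<bullet> x = p})"

definition line_Q :: "(real^2) \<times> real \<times> real \<Rightarrow> (real^2) set" where
  "line_Q D = (case D of (u, p, q) \<Rightarrow> {x. u \<bullet> x = q})"

text \<open>The first coordinate of any similarity h with h(P) = {x1 = -3}, h(Q) = {x1 = 3}
  is the affine map x \<mapsto> -3 + 6 (u\<bullet>x - p)/(q - p); hence g_(P,Q) = g \<circ> h is:\<close>
definition g_pair :: "(real^2) \<times> real \<times> real \<Rightarrow> real^2 \<Rightarrow> real" where
  "g_pair D x = (case D of (u, p, q) \<Rightarrow> gfun (-3 + 6 * (u \<bullet> x - p) / (q - p)))"

definition osc :: "(real \<Rightarrow> real^2) \<Rightarrow> real \<Rightarrow> real \<Rightarrow> (real^2) \<times> real \<times> real \<Rightarrow> real" where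
  "osc f a b D = Sup { - (\<Sum>i\<in>{1..k}. g_pair D (f (s (i - 1))) * g_pair D (f (s i))) | k s.
        a \<le> s 0 \<and> (\<forall>i<k. s i \<le> s (Suc i)) \<and> s k \<le> b }"

text \<open>Density of the enumerated pairs in the space of pairs of distinct parallel lines
  (unit normal representatives; (u,p,q) and (-u,-p,-q) represent the same pair).\<close>
definition dense_pairs :: "(nat \<Rightarrow> (real^2) \<times> real \<times> real) \<Rightarrow> bool" where
  "dense_pairs D \<longleftrightarrow> (\<forall>i. valid_pair (D i)) \<and>
     (\<forall>u p q e. norm u = 1 \<and> p \<noteq> q \<and> e > 0 \<longrightarrow>
        (\<exists>i. case D i of (u', p', q') \<Rightarrow>
           norm u' = 1 \<and>
           ((norm (u' - u) + \<bar>p' - p\<bar> + \<bar>q' - q\<bar> < e) \<or>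
            (norm (- u' - u) + \<bar>- p' - p\<bar> + \<bar>- q' - q\<bar> < e))))"

text \<open>Total oscillation of f restricted to [a,b], with respect to the enumeration D
  (the paper's index i \<ge> 1 corresponds to i+1 here).\<close>
definition total_osc :: "(nat \<Rightarrow> (real^2) \<times> real \<times> real) \<Rightarrow> (real \<Rightarrow> real^2) \<Rightarrow> real \<Rightarrow> real \<Rightarrow> real" where
  "total_osc D f a b = (\<Sum>i. (1/2) ^ (Suc i) * (osc f a b (D i) / (1 + osc f a b (D i))))"

definition osc_geodesic :: "(nat \<Rightarrow> (real^2) \<times> real \<times> real) \<Rightarrow> (real^2) set \<Rightarrow> (real \<Rightarrow> real^2) \<Rightarrow> bool" where
  "osc_geodesic D X \<alpha> \<longleftrightarrow> path \<alpha> \<and> path_image \<alpha> \<subseteq> X \<and>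
     (\<forall>\<beta>. path \<beta> \<and> path_image \<beta> \<subseteq> X \<and> homotopic_paths X \<alpha> \<beta> \<longrightarrow>
          total_osc D \<alpha> 0 1 \<le> total_osc D \<beta> 0 1)"

definition param_prop_osc :: "(nat \<Rightarrow> (real^2) \<times> real \<times> real) \<Rightarrow> (real \<Rightarrow> real^2) \<Rightarrow> bool" where
  "param_prop_osc D \<alpha> \<longleftrightarrow> (\<forall>t\<in>{0..1}. total_osc D \<alpha> 0 t = t * total_osc D \<alpha> 0 1)"

definition is_line :: "(real^2) set \<Rightarrow> bool" where
  "is_line l \<longleftrightarrow> (\<exists>p v. v \<noteq> 0 \<and> l = {p + t *\<^sub>R v | t. True})"

definition transverse :: "(real^2) set \<Rightarrow> (real \<Rightarrow> real^2) \<Rightarrow> real \<Rightarrow> real \<Rightarrow> bool" where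
  "transverse l \<gamma> a b \<longleftrightarrow> \<not> (\<exists>c d. a \<le> c \<and> c < d \<and> d \<le> b \<and>
      (\<exists>x y w. closed_segment x y \<subseteq> (\<lambda>z. z + w) ` l \<and> \<gamma> ` {c<..<d} \<subseteq> closed_segment x y))"

end

theory Submission
  imports Defs
begin

text \<open>A path taking two distinct values has positive total oscillation: the two values are
  separated by one of the densely enumerated pairs of lines, which then has oscillation at least 1.
  A parameterization proportional to total oscillation therefore cannot be constant on any
  subinterval, so every subinterval contains two rational times with distinct images. The
  differences of images at rational times form a countable set, hence some direction (1, m) is
  parallel to none of them, and a line in that direction is transverse to every path.\<close>

lemma abs_gfun_le_one: "\<bar>gfun y\<bar> \<le> 1"
  unfolding gfun_def by auto

lemma gfun_eq_minus_one: "y \<le> -3 \<Longrightarrow> gfun y = -1"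
  unfolding gfun_def by simp

lemma gfun_eq_one: "3 \<le> y \<Longrightarrow> gfun y = 1"
  unfolding gfun_def by simp

lemma gfun_mult_neg_imp_dist_gt_2: "gfun x * gfun y < 0 \<Longrightarrow> 2 < \<bar>x - y\<bar>"
  unfolding gfun_def by (auto simp: mult_less_0_iff split: if_splits)

lemma g_pair_uminus: "g_pair (-u, -p, -q) = g_pair (u, p, q)"
proof
  fix x
  have "- u \<bullet> x - - p = - (u \<bullet> x - p)" "- q - - p = - (q - p)"
    by (simp_all add: inner_minus_left)
  then have "6 * (- u \<bullet> x - - p) / (- q - - p) = 6 * (u \<bullet> x - p) / (q - p)"
    by (simp only: mult_minus_right minus_divide_divide)
  then show "g_pair (-u, -p, -q) x = g_pair (u, p, q) x"
    unfolding g_pair_def by simp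
qed

lemma g_pair_separates:
  assumes "P < Q" "U \<bullet> x \<le> P" "Q \<le> U \<bullet> y"
  shows "g_pair (U, P, Q) x = -1" "g_pair (U, P, Q) y = 1"
proof -
  have "6 * (U \<bullet> x - P) / (Q - P) \<le> 0"
    using assms by (simp add: divide_nonpos_pos)
  then show "g_pair (U, P, Q) x = -1"
    unfolding g_pair_def by (simp add: gfun_eq_minus_one)
  have "1 \<le> (U \<bullet> y - P) / (Q - P)"
    using assms by simp
  moreover have "6 * (U \<bullet> y - P) / (Q - P) = 6 * ((U \<bullet> y - P) / (Q - P))"
    by (rule times_divide_eq_right [symmetric])
  ultimately have "3 \<le> -3 + 6 * (U \<bullet> y - P) / (Q - P)"
    by linarith
  then show "g_pair (U, P, Q) y = 1"
    unfolding g_pair_def using gfun_eq_one by simp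
qed

lemma dense_pairs_approx:
  assumes "dense_pairs D" "norm u = 1" "p \<noteq> q" "0 < e"
  obtains i U P Q where "g_pair (D i) = g_pair (U, P, Q)"
    "norm (U - u) + \<bar>P - p\<bar> + \<bar>Q - q\<bar> < e"
proof -
  have "\<exists>i. case D i of (u', p', q') \<Rightarrow> norm u' = 1 \<and>
      (norm (u' - u) + \<bar>p' - p\<bar> + \<bar>q' - q\<bar> < e
        \<or> norm (- u' - u) + \<bar>- p' - p\<bar> + \<bar>- q' - q\<bar> < e)"
    using assms unfolding dense_pairs_def by simp
  then obtain i u' p' q' where Di: "D i = (u', p', q')"
    and "norm (u' - u) + \<bar>p' - p\<bar> + \<bar>q' - q\<bar> < e
      \<or> norm (- u' - u) + \<bar>- p' - p\<bar> + \<bar>- q' - q\<bar> < e"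
    by (auto split: prod.splits) (meson prod_cases3)
  then consider "norm (u' - u) + \<bar>p' - p\<bar> + \<bar>q' - q\<bar> < e"
    | "norm (- u' - u) + \<bar>- p' - p\<bar> + \<bar>- q' - q\<bar> < e"
    by blast
  then show thesis
  proof cases
    case 1
    then show thesis using that[of i u' p' q'] Di by simp
  next
    case 2
    then show thesis using that[of i "-u'" "-p'" "-q'"] Di g_pair_uminus[of u' p' q'] by simp
  qed
qed

text \<open>Approximate the pair of lines orthogonal to the segment from x to y through its points
  at a quarter and at three quarters of the way.\<close>
lemma dense_pairs_separate:
  fixes x y :: "real^2"
  assumes "dense_pairs D" "x \<noteq> y"
  obtains i where "g_pair (D i) x = -1" "g_pair (D i) y = 1"
proof -
  define L where "L = norm (y - x)"
  define u where "u = (y - x) /\<^sub>R L"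
  have "0 < L" using assms(2) by (simp add: L_def)
  have "norm u = 1" using \<open>0 < L\<close> by (simp add: u_def L_def)
  have "u \<bullet> y - u \<bullet> x = u \<bullet> (y - x)"
    by (simp add: inner_diff_right)
  also have "\<dots> = ((y - x) \<bullet> (y - x)) / L"
    by (simp add: u_def divide_inverse_commute)
  also have "\<dots> = L"
    using \<open>0 < L\<close> by (simp add: L_def dot_square_norm power2_eq_square)
  finally have "u \<bullet> y - u \<bullet> x = L" .
  define p where "p = u \<bullet> x + L / 4"
  define q where "q = u \<bullet> x + 3 * L / 4"
  define M where "M = norm x + norm y + 1"
  have "0 < M" using norm_ge_zero[of x] norm_ge_zero[of y] unfolding M_def by linarith
  define e where "e = L / (8 * M)"
  have "0 < e" using \<open>0 < L\<close> \<open>0 < M\<close> by (simp add: e_def)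
  have "e * M = L / 8"
    using \<open>0 < M\<close> by (simp add: e_def)
  have "p \<noteq> q" using \<open>0 < L\<close> by (simp add: p_def q_def)
  obtain i U P Q where gi: "g_pair (D i) = g_pair (U, P, Q)"
    and close: "norm (U - u) + \<bar>P - p\<bar> + \<bar>Q - q\<bar> < e"
    using dense_pairs_approx[OF assms(1) \<open>norm u = 1\<close> \<open>p \<noteq> q\<close> \<open>0 < e\<close>] by blast
  have inner_close: "\<bar>U \<bullet> z - u \<bullet> z\<bar> \<le> e * norm z" for z
  proof -
    have "\<bar>U \<bullet> z - u \<bullet> z\<bar> \<le> norm (U - u) * norm z"
      by (metis Cauchy_Schwarz_ineq2 inner_diff_left)
    also have "\<dots> \<le> e * norm z"
      using close by (intro mult_right_mono) auto
    finally show ?thesis .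
  qed
  have "e * norm x \<le> e * M" "e * norm y \<le> e * M" "e * 1 \<le> e * M"
    using \<open>0 < e\<close> norm_ge_zero[of x] norm_ge_zero[of y]
    by (intro mult_left_mono; simp add: M_def)+
  then have "\<bar>U \<bullet> x - u \<bullet> x\<bar> \<le> L / 8" "\<bar>U \<bullet> y - u \<bullet> y\<bar> \<le> L / 8" "e \<le> L / 8"
    using inner_close[of x] inner_close[of y] \<open>e * M = L / 8\<close> by linarith+
  moreover have "\<bar>P - p\<bar> < e" "\<bar>Q - q\<bar> < e"
    using close norm_ge_zero[of "U - u"] by linarith+
  ultimately have "P < Q" "U \<bullet> x \<le> P" "Q \<le> U \<bullet> y"
    using \<open>u \<bullet> y - u \<bullet> x = L\<close> \<open>0 < L\<close> unfolding p_def q_def by linarith+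
  then have "g_pair (D i) x = -1" "g_pair (D i) y = 1"
    unfolding gi by (rule g_pair_separates)+
  then show thesis
    by (rule that)
qed

definition osc_sums :: "(real \<Rightarrow> real^2) \<Rightarrow> real \<Rightarrow> real \<Rightarrow> (real^2) \<times> real \<times> real \<Rightarrow> real set" where
  "osc_sums f a b D = { - (\<Sum>i\<in>{1..k}. g_pair D (f (s (i - 1))) * g_pair D (f (s i))) | k s.
        a \<le> s 0 \<and> (\<forall>i<k. s i \<le> s (Suc i)) \<and> s k \<le> b }"

lemma osc_eq_Sup_osc_sums: "osc f a b D = Sup (osc_sums f a b D)"
  unfolding osc_def osc_sums_def ..

lemma mono_upto_le:
  fixes s :: "nat \<Rightarrow> 'a::order"
  assumes "\<forall>i<k. s i \<le> s (Suc i)" "i \<le> j" "j \<le> k"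
  shows "s i \<le> s j"
  using assms(2,3)
proof (induction j rule: dec_induct)
  case (step n)
  then have "s i \<le> s n" by simp
  also have "\<dots> \<le> s (Suc n)" using assms(1) step by simp
  finally show ?case .
qed simp

lemma sum_telescope_pred:
  fixes s :: "nat \<Rightarrow> 'a::ab_group_add"
  shows "(\<Sum>i\<in>{1..k}. s i - s (i - 1)) = s k - s 0"
  by (induction k) auto

lemma gfun_summand_le_step:
  fixes H :: "real \<Rightarrow> real"
  assumes "0 < \<eta>" "\<sigma> \<le> \<tau>" "\<sigma> \<in> S" "\<tau> \<in> S"
    and "\<And>t t'. t \<in> S \<Longrightarrow> t' \<in> S \<Longrightarrow> dist t' t < \<eta> \<Longrightarrow> dist (H t') (H t) < 2"
  shows "- (gfun (H \<sigma>) * gfun (H \<tau>)) \<le> (\<tau> - \<sigma>) / \<eta>"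
proof (cases "gfun (H \<sigma>) * gfun (H \<tau>) < 0")
  case True
  then have "\<not> dist \<tau> \<sigma> < \<eta>"
    using assms(3-5) gfun_mult_neg_imp_dist_gt_2 by (fastforce simp: dist_real_def)
  then have "1 \<le> (\<tau> - \<sigma>) / \<eta>"
    using assms(1,2) by (simp add: dist_real_def)
  moreover have "\<bar>gfun (H \<sigma>) * gfun (H \<tau>)\<bar> \<le> 1"
    by (simp add: abs_mult abs_gfun_le_one mult_le_one)
  ultimately show ?thesis
    by linarith
next
  case False
  then show ?thesis
    using divide_nonneg_pos[of "\<tau> - \<sigma>" \<eta>] assms(1,2) by linarith
qed

text \<open>By uniform continuity a summand can only be positive across a step of length at least
  some \<eta> > 0, so every oscillation sum is at most (b - a) / \<eta>.\<close>
lemma bdd_above_osc_sums: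
  assumes "continuous_on {a..b} f"
  shows "bdd_above (osc_sums f a b D)"
proof -
  obtain u p q where D: "D = (u, p, q)" by (cases D)
  define H where "H t = -3 + 6 / (q - p) * (u \<bullet> f t - p)" for t
  have gH: "g_pair D (f t) = gfun (H t)" for t
    unfolding D g_pair_def H_def by simp
  have "uniformly_continuous_on {a..b} H"
    unfolding H_def by (intro compact_uniformly_continuous continuous_intros assms) auto
  then obtain \<eta> where "0 < \<eta>"
    and \<eta>: "\<And>t t'. t \<in> {a..b} \<Longrightarrow> t' \<in> {a..b} \<Longrightarrow> dist t' t < \<eta> \<Longrightarrow> dist (H t') (H t) < 2"
    unfolding uniformly_continuous_on_def by (metis zero_less_numeral)
  have "z \<le> (b - a) / \<eta>" if "z \<in> osc_sums f a b D" for z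
  proof -
    obtain k s where z: "z = - (\<Sum>i\<in>{1..k}. gfun (H (s (i - 1))) * gfun (H (s i)))"
      and s: "a \<le> s 0" "\<forall>i<k. s i \<le> s (Suc i)" "s k \<le> b"
      using \<open>z \<in> osc_sums f a b D\<close> unfolding osc_sums_def gH by blast
    have s_in: "s i \<in> {a..b}" if "i \<le> k" for i
      using mono_upto_le[OF s(2), of 0 i] mono_upto_le[OF s(2), of i k] s that by auto
    have "- (gfun (H (s (i - 1))) * gfun (H (s i))) \<le> (s i - s (i - 1)) / \<eta>"
      if "i \<in> {1..k}" for i
      using that by (intro gfun_summand_le_step[OF \<open>0 < \<eta>\<close> _ s_in s_in \<eta>] mono_upto_le[OF s(2)]) auto
    then have "z \<le> (\<Sum>i\<in>{1..k}. (s i - s (i - 1)) / \<eta>)"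
      unfolding z sum_negf [symmetric] by (rule sum_mono)
    also have "\<dots> = (s k - s 0) / \<eta>"
      by (simp only: sum_divide_distrib [symmetric] sum_telescope_pred)
    also have "\<dots> \<le> (b - a) / \<eta>"
      using s \<open>0 < \<eta>\<close> by (simp add: divide_right_mono)
    finally show ?thesis .
  qed
  then show ?thesis
    unfolding bdd_above_def by blast
qed

lemma osc_nonneg:
  assumes "continuous_on {a..b} f" "a \<le> b"
  shows "0 \<le> osc f a b D"
proof -
  have "0 \<in> osc_sums f a b D"
    unfolding osc_sums_def using assms(2) by (intro CollectI exI[of _ 0] exI[of _ "\<lambda>_. a"]) simp
  then show ?thesis
    unfolding osc_eq_Sup_osc_sums using bdd_above_osc_sums[OF assms(1)] by (rule cSup_upper)
qed

lemma one_le_osc: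
  assumes "continuous_on {a..b} f" "s \<in> {a..b}" "t \<in> {a..b}"
    and "g_pair E (f s) * g_pair E (f t) = -1"
  shows "1 \<le> osc f a b E"
proof -
  have "1 \<in> osc_sums f a b E"
  proof (cases "s \<le> t")
    case True
    then show ?thesis
      unfolding osc_sums_def using assms(2-4)
      by (intro CollectI exI[of _ 1] exI[of _ "\<lambda>i. if i = 0 then s else t"]) auto
  next
    case False
    then show ?thesis
      unfolding osc_sums_def using assms(2-4)
      by (intro CollectI exI[of _ 1] exI[of _ "\<lambda>i. if i = 0 then t else s"]) (auto simp: mult.commute)
  qed
  then show ?thesis
    unfolding osc_eq_Sup_osc_sums using bdd_above_osc_sums[OF assms(1)] by (rule cSup_upper)
qed

lemma total_osc_pos:
  assumes "dense_pairs D" "continuous_on {a..b} f" "s \<in> {a..b}" "t \<in> {a..b}" "f s \<noteq> f t"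
  shows "0 < total_osc D f a b"
proof -
  define r where "r i = osc f a b (D i) / (1 + osc f a b (D i))" for i
  define h where "h i = (1/2::real) ^ Suc i * r i" for i
  have osc_ge_0: "0 \<le> osc f a b (D i)" for i
    using osc_nonneg[OF assms(2)] assms(3) by simp
  have r: "0 \<le> r i" "r i \<le> 1" for i
    unfolding r_def using osc_ge_0[of i] by simp_all
  then have h_nonneg: "0 \<le> h i" for i
    unfolding h_def by simp
  have h_le: "h i \<le> (1/2) ^ Suc i" for i
    unfolding h_def using mult_left_le[OF r(2), of "(1/2) ^ Suc i"] by simp
  have "summable h"
    by (rule summable_comparison_test'[of "\<lambda>i. (1/2::real) ^ Suc i"]) (use h_nonneg h_le in auto)
  obtain i where "g_pair (D i) (f s) = -1" "g_pair (D i) (f t) = 1"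
    using dense_pairs_separate[OF assms(1,5)] by blast
  then have "1 \<le> osc f a b (D i)"
    by (intro one_le_osc[OF assms(2-4)]) simp
  then have "0 < h i"
    unfolding h_def r_def by simp
  then have "0 < suminf h"
    using \<open>summable h\<close> h_nonneg by (intro suminf_pos2)
  then show ?thesis
    unfolding total_osc_def h_def r_def .
qed

text \<open>Sample points in [c, d] may be pushed down to c without changing any oscillation sum.\<close>
lemma osc_sums_eq_if_constant:
  assumes "a \<le> c" "c \<le> d" "\<And>x. x \<in> {c..d} \<Longrightarrow> f x = f c"
  shows "osc_sums f a c E = osc_sums f a d E"
proof (intro antisym subsetI)
  fix z assume "z \<in> osc_sums f a c E"
  then obtain k s where "z = - (\<Sum>i\<in>{1..k}. g_pair E (f (s (i - 1))) * g_pair E (f (s i)))"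
    "a \<le> s 0" "\<forall>i<k. s i \<le> s (Suc i)" "s k \<le> c"
    unfolding osc_sums_def by blast
  then show "z \<in> osc_sums f a d E"
    unfolding osc_sums_def using assms(2) by (intro CollectI exI[of _ k] exI[of _ s]) auto
next
  fix z assume "z \<in> osc_sums f a d E"
  then obtain k s where z: "z = - (\<Sum>i\<in>{1..k}. g_pair E (f (s (i - 1))) * g_pair E (f (s i)))"
    and s: "a \<le> s 0" "\<forall>i<k. s i \<le> s (Suc i)" "s k \<le> d"
    unfolding osc_sums_def by blast
  define s' where "s' i = min (s i) c" for i
  have "f (s' i) = f (s i)" if "i \<le> k" for i
    using assms(3)[of "s i"] mono_upto_le[OF s(2) that order_refl] s(3) by (auto simp: s'_def min_def)
  then have "z = - (\<Sum>i\<in>{1..k}. g_pair E (f (s' (i - 1))) * g_pair E (f (s' i)))"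
    unfolding z by (intro arg_cong[where f = uminus] sum.cong) auto
  moreover have "a \<le> s' 0" "\<forall>i<k. s' i \<le> s' (Suc i)" "s' k \<le> c"
    using s assms(1,2) by (auto simp: s'_def)
  ultimately show "z \<in> osc_sums f a c E"
    unfolding osc_sums_def by blast
qed

text \<open>Constancy on [c', d'] \<subseteq> (c, d) makes the total oscillations on [0, c'] and on [0, d']
  equal, that is c' T = d' T.\<close>
lemma param_prop_osc_constant_imp_total_osc_eq_0:
  assumes "param_prop_osc D f" "0 \<le> c" "c < d" "d \<le> 1"
    and "\<And>x y. x \<in> {c<..<d} \<Longrightarrow> y \<in> {c<..<d} \<Longrightarrow> f x = f y"
  shows "total_osc D f 0 1 = 0"
proof -
  define c' where "c' = c + (d - c) / 3"
  define d' where "d' = c + 2 * (d - c) / 3"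
  have "0 \<le> c'" "c' < d'" "d' \<le> 1" "c < c'" "d' < d"
    using assms(2-4) unfolding c'_def d'_def by (simp_all add: field_simps)
  then have "osc_sums f 0 c' E = osc_sums f 0 d' E" for E
    by (intro osc_sums_eq_if_constant assms(5)) auto
  then have "total_osc D f 0 c' = total_osc D f 0 d'"
    unfolding total_osc_def osc_eq_Sup_osc_sums by simp
  moreover have "total_osc D f 0 t = t * total_osc D f 0 1" if "t \<in> {0..1}" for t
    using assms(1) that unfolding param_prop_osc_def by blast
  ultimately have "c' * total_osc D f 0 1 = d' * total_osc D f 0 1"
    using \<open>0 \<le> c'\<close> \<open>c' < d'\<close> \<open>d' \<le> 1\<close> by (metis atLeastAtMost_iff order.trans less_imp_le)
  then show ?thesis
    using \<open>c' < d'\<close> by simp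
qed

lemma continuous_nonconstant_on_rationals:
  fixes f :: "real \<Rightarrow> 'a::t1_space"
  assumes "continuous_on {c..d} f" "c < d"
    and "\<exists>x\<in>{c<..<d}. \<exists>y\<in>{c<..<d}. f x \<noteq> f y"
  shows "\<exists>s\<in>\<rat> \<inter> {c<..<d}. \<exists>t\<in>\<rat> \<inter> {c<..<d}. f s \<noteq> f t"
proof (rule ccontr)
  assume "\<not> ?thesis"
  then have const: "f s = f t" if "s \<in> {c<..<d} \<inter> \<rat>" "t \<in> {c<..<d} \<inter> \<rat>" for s t
    using that by blast
  obtain t0 where t0: "t0 \<in> {c<..<d} \<inter> \<rat>"
    using Rats_dense_in_real[OF assms(2)] by auto
  have closure: "closure ({c<..<d} \<inter> \<rat>) = {c..d}"
    using closure_open_Int_superset[of "{c<..<d}" \<rat>] assms(2) by (simp add: Rats_closure_real)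
  have "f x = f t0" if "x \<in> {c<..<d}" for x
    using continuous_constant_on_closure[of "{c<..<d} \<inter> \<rat>" f "f t0" x] assms(1) const[OF _ t0] that
    unfolding closure by auto
  then show False
    using assms(3) by auto
qed

lemma exists_direction_not_parallel:
  fixes C :: "(real^2) set"
  assumes "countable C"
  obtains v :: "real^2" where "v \<noteq> 0" "\<And>z r. z \<in> C \<Longrightarrow> z = r *\<^sub>R v \<Longrightarrow> z = 0"
proof -
  have "countable ((\<lambda>z. z $ 2 / z $ 1) ` C)"
    using assms by simp
  then obtain m where m: "m \<notin> (\<lambda>z. z $ 2 / z $ 1) ` C"
    using uncountable_UNIV_real by (metis UNIV_eq_I)
  define v :: "real^2" where "v = vector [1, m]"
  have "z = 0" if "z \<in> C" "z = r *\<^sub>R v" for z r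
  proof (cases "r = 0")
    case False
    then have "z $ 2 / z $ 1 = m"
      using that(2) by (simp add: v_def)
    then show ?thesis
      using m that(1) by blast
  qed (use that in simp)
  moreover have "v \<noteq> 0"
    by (metis one_neq_zero v_def vector_2(1) zero_index)
  ultimately show thesis
    using that by blast
qed

lemma transverse_line_through_0:
  assumes "\<And>c d. a \<le> c \<Longrightarrow> c < d \<Longrightarrow> d \<le> b \<Longrightarrow>
    \<exists>s\<in>{c<..<d}. \<exists>t\<in>{c<..<d}. \<forall>r. \<gamma> t - \<gamma> s \<noteq> r *\<^sub>R v"
  shows "transverse {0 + r *\<^sub>R v | r. True} \<gamma> a b"
  unfolding transverse_def
proof clarify
  fix c d x y w
  assume cd: "a \<le> c" "c < d" "d \<le> b"
    and seg: "closed_segment x y \<subseteq> (\<lambda>z. z + w) ` {0 + r *\<^sub>R v | r. True}"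
    and img: "\<gamma> ` {c<..<d} \<subseteq> closed_segment x y"
  have on_line: "\<exists>r. \<gamma> t = r *\<^sub>R v + w" if "t \<in> {c<..<d}" for t
  proof -
    have "\<gamma> t \<in> (\<lambda>z. z + w) ` {0 + r *\<^sub>R v | r. True}"
      using that seg img by blast
    then show ?thesis by auto
  qed
  obtain s t where "s \<in> {c<..<d}" "t \<in> {c<..<d}" "\<forall>r. \<gamma> t - \<gamma> s \<noteq> r *\<^sub>R v"
    using assms[OF cd] by blast
  moreover obtain r r' where "\<gamma> s = r *\<^sub>R v + w" "\<gamma> t = r' *\<^sub>R v + w"
    using on_line calculation(1,2) by blast
  ultimately show False
    by (metis add_diff_cancel_right scaleR_diff_left)
qed

lemma param_prop_osc_nonconstant_on_rationals:
  assumes "dense_pairs D" "continuous_on {0..1} f" "param_prop_osc D f"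
    and "s \<in> {0..1}" "t \<in> {0..1}" "f s \<noteq> f t"
    and "0 \<le> c" "c < d" "d \<le> 1"
  shows "\<exists>s\<in>\<rat> \<inter> {c<..<d}. \<exists>t\<in>\<rat> \<inter> {c<..<d}. f s \<noteq> f t"
proof (rule continuous_nonconstant_on_rationals)
  show "continuous_on {c..d} f"
    using assms(2) by (rule continuous_on_subset) (use assms(7,9) in auto)
  show "\<exists>x\<in>{c<..<d}. \<exists>y\<in>{c<..<d}. f x \<noteq> f y"
  proof (rule ccontr)
    assume "\<not> ?thesis"
    then have "total_osc D f 0 1 = 0"
      by (intro param_prop_osc_constant_imp_total_osc_eq_0[OF assms(3,7-9)]) blast
    then show False
      using total_osc_pos[OF assms(1,2,4-6)] by simp
  qed
qed (use assms(8) in auto)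

lemma param_prop_osc_transverse:
  assumes "dense_pairs D" "continuous_on {0..1} f" "param_prop_osc D f"
    and "\<exists>s\<in>{0..1}. \<exists>t\<in>{0..1}. f s \<noteq> f t"
    and "\<And>s t r. s \<in> \<rat> \<Longrightarrow> t \<in> \<rat> \<Longrightarrow> f t - f s = r *\<^sub>R v \<Longrightarrow> f t = f s"
  shows "transverse {0 + r *\<^sub>R v | r. True} f 0 1"
proof (rule transverse_line_through_0)
  fix c d :: real assume "0 \<le> c" "c < d" "d \<le> 1"
  moreover obtain s0 t0 where "s0 \<in> {0..1}" "t0 \<in> {0..1}" "f s0 \<noteq> f t0"
    using assms(4) by blast
  ultimately have "\<exists>s\<in>\<rat> \<inter> {c<..<d}. \<exists>t\<in>\<rat> \<inter> {c<..<d}. f s \<noteq> f t"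
    by (intro param_prop_osc_nonconstant_on_rationals[OF assms(1-3)])
  then obtain s t where st: "s \<in> \<rat> \<inter> {c<..<d}" "t \<in> \<rat> \<inter> {c<..<d}" "f s \<noteq> f t"
    by blast
  have "f t - f s \<noteq> r *\<^sub>R v" for r
    using assms(5)[of s t r] st by auto
  then show "\<exists>s\<in>{c<..<d}. \<exists>t\<in>{c<..<d}. \<forall>r. f t - f s \<noteq> r *\<^sub>R v"
    using st(1,2) by blast
qed

theorem lemma4p6:
  fixes X :: "(real^2) set"
    and D :: "nat \<Rightarrow> (real^2) \<times> real \<times> real"
    and A :: "(real \<Rightarrow> real^2) set"
  assumes "dense_pairs D"
    and "countable A"
    and "\<And>\<alpha>. \<alpha> \<in> A \<Longrightarrow> osc_geodesic D X \<alpha>"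
    and "\<And>\<alpha>. \<alpha> \<in> A \<Longrightarrow> \<exists>s\<in>{0..1}. \<exists>t\<in>{0..1}. \<alpha> s \<noteq> \<alpha> t"
    and "\<And>\<alpha>. \<alpha> \<in> A \<Longrightarrow> param_prop_osc D \<alpha>"
  shows "\<exists>l. is_line l \<and> (\<forall>\<alpha>\<in>A. transverse l \<alpha> 0 1)"
proof -
  define C where "C = (\<lambda>(\<alpha>, s, t). \<alpha> t - \<alpha> s) ` (A \<times> \<rat> \<times> \<rat>)"
  have "countable C"
    unfolding C_def using assms(2) by (intro countable_image countable_SIGMA countable_rat)
  then obtain v where "v \<noteq> 0" and v: "\<And>z r. z \<in> C \<Longrightarrow> z = r *\<^sub>R v \<Longrightarrow> z = 0"
    by (rule exists_direction_not_parallel) blast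
  have "is_line {0 + r *\<^sub>R v | r. True}"
    unfolding is_line_def using \<open>v \<noteq> 0\<close> by blast
  moreover have "transverse {0 + r *\<^sub>R v | r. True} \<alpha> 0 1" if "\<alpha> \<in> A" for \<alpha>
  proof (rule param_prop_osc_transverse[OF assms(1) _ assms(5,4)[OF that]])
    show "continuous_on {0..1} \<alpha>"
      using assms(3)[OF that] by (simp add: osc_geodesic_def path_def)
    show "\<alpha> t = \<alpha> s" if "s \<in> \<rat>" "t \<in> \<rat>" "\<alpha> t - \<alpha> s = r *\<^sub>R v" for s t r
    proof -
      have "\<alpha> t - \<alpha> s \<in> C"
        unfolding C_def using \<open>\<alpha> \<in> A\<close> that(1,2) by (intro image_eqI[where x = "(\<alpha>, s, t)"]) auto
      then show ?thesis
        using v[OF _ that(3)] by simp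
    qed
  qed
  ultimately show ?thesis
    by blast
qed

end
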